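(* Let $p$ be a prime, let $q:\mathbb{F}_p^n\to\mathbb{F}_p$ be a quadratic form and let $b:\mathbb{F}_p^n\times\mathbb{F}_p^n\to\mathbb{F}_p$ be a bilinear form such that $q(x)=b(x,x)$ for every $x\in\mathbb{F}_p^n$. Then $\mathrm{erk}\,q\le\mathrm{erk}\,b$.
   Context: The essential rank of the quadratic form $q$ is $\mathrm{erk}\,q=\min\mathrm{rk}(q+q_\Delta)$ over all diagonal quadratic forms $q_\Delta(x)=\sum_i a_ix_i^2$, where for a polynomial $Q$ of degree $2$, $\mathrm{rk}\,Q$ is the least $k$ such that $Q=\sum_{i=1}^k Q_iR_i$ with polynomials $Q_i,R_i$ of degree at most $1$ (and $\mathrm{rk}$ of a polynomial of degree at most $1$ is defined via the degree-$\le1$ conventions; here we use the degree-2 rank). The essential (partition) rank of the bilinear form $b$ is $\mathrm{erk}\,b=\min\mathrm{rank}(b+b_\Delta)$ over all diagonal bilinear forms $b_\Delta(x,y)=\sum_i c_ix_iy_i$, where rank is matrix rank. *)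

theory Defs
  imports Main "Jordan_Normal_Form.DL_Rank"
begin

(* Vectors of F^n are functions nat => 'a, only coordinates i < n matter.
   A polynomial of degree <= 2 in x_0..x_{n-1} is represented by a triple
   (c, l, M) meaning  c + sum_i l i * x_i + sum_{i,j} M i j * x_i * x_j.
   Equality of such polynomials (as formal polynomials, not as functions)
   is equality of coefficients of the monomials 1, x_i, x_i x_j (i <= j). *)

type_synonym 'a poly2 = "'a \<times> (nat \<Rightarrow> 'a) \<times> (nat \<Rightarrow> nat \<Rightarrow> 'a)"
type_synonym 'a poly1 = "'a \<times> (nat \<Rightarrow> 'a)"

definition mono_coeff :: "(nat \<Rightarrow> nat \<Rightarrow> 'a::comm_ring_1) \<Rightarrow> nat \<Rightarrow> nat \<Rightarrow> 'a" where
  "mono_coeff M i j = (if i = j then M i i else M i j + M j i)"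

definition poly2_eq :: "nat \<Rightarrow> 'a::comm_ring_1 poly2 \<Rightarrow> 'a poly2 \<Rightarrow> bool" where
  "poly2_eq n P R \<longleftrightarrow>
     fst P = fst R \<and>
     (\<forall>i<n. fst (snd P) i = fst (snd R) i) \<and>
     (\<forall>i<n. \<forall>j<n. i \<le> j \<longrightarrow> mono_coeff (snd (snd P)) i j = mono_coeff (snd (snd R)) i j)"

definition poly1_mult :: "'a::comm_ring_1 poly1 \<Rightarrow> 'a poly1 \<Rightarrow> 'a poly2" where
  "poly1_mult A B = (fst A * fst B, (\<lambda>i. fst A * snd B i + fst B * snd A i),
                     (\<lambda>i j. snd A i * snd B j))"

definition poly2_sum :: "(nat \<Rightarrow> 'a::comm_ring_1 poly2) \<Rightarrow> nat \<Rightarrow> 'a poly2" where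
  "poly2_sum F k = ((\<Sum>t<k. fst (F t)), (\<lambda>i. \<Sum>t<k. fst (snd (F t)) i),
                    (\<lambda>i j. \<Sum>t<k. snd (snd (F t)) i j))"

definition rk_poly2 :: "nat \<Rightarrow> 'a::comm_ring_1 poly2 \<Rightarrow> nat" where
  "rk_poly2 n P = (LEAST k. \<exists>A B :: nat \<Rightarrow> 'a poly1.
      poly2_eq n P (poly2_sum (\<lambda>t. poly1_mult (A t) (B t)) k))"

definition qform_poly :: "nat \<Rightarrow> (nat \<Rightarrow> nat \<Rightarrow> 'a::comm_ring_1) \<Rightarrow> 'a poly2" where
  "qform_poly n Q = (0, (\<lambda>_. 0), (\<lambda>i j. if i < n \<and> j < n then Q i j else 0))"

definition qform_eval :: "nat \<Rightarrow> (nat \<Rightarrow> nat \<Rightarrow> 'a::comm_ring_1) \<Rightarrow> (nat \<Rightarrow> 'a) \<Rightarrow> 'a" where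
  "qform_eval n Q x = (\<Sum>i<n. \<Sum>j<n. Q i j * x i * x j)"

definition bform_eval :: "nat \<Rightarrow> (nat \<Rightarrow> nat \<Rightarrow> 'a::comm_ring_1) \<Rightarrow> (nat \<Rightarrow> 'a) \<Rightarrow> (nat \<Rightarrow> 'a) \<Rightarrow> 'a" where
  "bform_eval n B x y = (\<Sum>i<n. \<Sum>j<n. B i j * x i * y j)"

definition erk_qform :: "nat \<Rightarrow> (nat \<Rightarrow> nat \<Rightarrow> 'a::comm_ring_1) \<Rightarrow> nat" where
  "erk_qform n Q = (LEAST r. \<exists>a :: nat \<Rightarrow> 'a.
      r = rk_poly2 n (qform_poly n (\<lambda>i j. Q i j + (if i = j then a i else 0))))"

definition erk_bform :: "nat \<Rightarrow> (nat \<Rightarrow> nat \<Rightarrow> 'a::field) \<Rightarrow> nat" where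
  "erk_bform n B = (LEAST r. \<exists>c :: nat \<Rightarrow> 'a.
      r = vec_space.rank n (mat n n (\<lambda>(i, j). B i j + (if i = j then c i else 0))))"

end

theory Submission
  imports Defs
begin

(* Evaluating q(x) = b(x,x) at the vectors e_i and e_i + e_j recovers q as a formal polynomial:
   Q and B have the same diagonal and the same symmetrised entries Q i j + Q j i = B i j + B j i.
   So if a diagonal correction turns the matrix of b into sum_{t<r} u_t v_t^T with r = erk b,
   the same diagonal correction turns q into sum_{t<r} (u_t . x) (v_t . x), a sum of r products
   of linear forms.  Nothing here uses that the field has prime order. *)

lemma qform_eval_indicator:
  fixes M :: "nat \<Rightarrow> nat \<Rightarrow> 'a::comm_ring_1"
  assumes "S \<subseteq> {..<n}"
  shows "qform_eval n M (\<lambda>k. if k \<in> S then 1 else 0) = (\<Sum>i\<in>S. \<Sum>j\<in>S. M i j)"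
proof -
  have "qform_eval n M (\<lambda>k. if k \<in> S then 1 else 0) =
      (\<Sum>i<n. if i \<in> S then \<Sum>j<n. if j \<in> S then M i j else 0 else 0)"
    unfolding qform_eval_def by (intro sum.cong refl) (auto intro: sum.cong)
  also have "\<dots> = (\<Sum>i\<in>S. \<Sum>j\<in>S. M i j)"
    using assms by (simp add: sum.If_cases Int_absorb1 Int_absorb2)
  finally show ?thesis .
qed

lemma mono_coeff_eq_if_qform_eval_eq:
  fixes M N :: "nat \<Rightarrow> nat \<Rightarrow> 'a::comm_ring_1"
  assumes eval_eq: "\<And>x. qform_eval n M x = qform_eval n N x" and "i < n" "j < n"
  shows "mono_coeff M i j = mono_coeff N i j"
proof -
  have diag: "M k k = N k k" if "k < n" for k
    using eval_eq[of "\<lambda>l. if l \<in> {k} then 1 else 0"] that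
      qform_eval_indicator[of "{k}" n M] qform_eval_indicator[of "{k}" n N] by simp
  show ?thesis
  proof (cases "i = j")
    case True
    then show ?thesis using diag \<open>i < n\<close> by (simp add: mono_coeff_def)
  next
    case False
    have "M i i + M j i + (M i j + M j j) = N i i + N j i + (N i j + N j j)"
      using eval_eq[of "\<lambda>l. if l \<in> {i, j} then 1 else 0"] False assms(2,3)
        qform_eval_indicator[of "{i, j}" n M] qform_eval_indicator[of "{i, j}" n N] by simp
    then show ?thesis using False diag assms(2,3) by (simp add: mono_coeff_def algebra_simps)
  qed
qed

lemma (in vec_space) cols_subset_span_of_maximal_lin_indpt:
  assumes A: "A \<in> carrier_mat n nc"
    and S: "maximal S (\<lambda>T. T \<subseteq> set (cols A) \<and> lin_indpt T)"
  shows "set (cols A) \<subseteq> span S"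
proof
  fix w assume w: "w \<in> set (cols A)"
  have S_cols: "S \<subseteq> set (cols A)" and S_indpt: "lin_indpt S"
    using S unfolding maximal_def by auto
  have cols_carrier: "set (cols A) \<subseteq> carrier_vec n" using A cols_dim by blast
  then have S_carrier: "S \<subseteq> carrier_vec n" using S_cols by blast
  show "w \<in> span S"
  proof (cases "w \<in> S")
    case True
    then show ?thesis using in_own_span[OF S_carrier] by blast
  next
    case False
    have "\<not> lin_indpt (insert w S)"
    proof
      assume "lin_indpt (insert w S)"
      then have "insert w S = S"
        using S w S_cols unfolding maximal_def by (simp add: subset_insertI)
      then show False using False by blast
    qed
    then show ?thesis
      using lin_dep_iff_in_span[OF S_carrier S_indpt _ False] w cols_carrier by auto
  qed
qed

lemma (in vec_space) rank_factorization:
  assumes A: "A \<in> carrier_mat n nc"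
  obtains u v where "\<And>i j. i < n \<Longrightarrow> j < nc \<Longrightarrow> A $$ (i, j) = (\<Sum>t<rank A. u t i * v t j)"
proof -
  have "lin_indpt {}"
    unfolding lin_dep_def by simp
  have "\<exists>S. finite S \<and> maximal S (\<lambda>T. T \<subseteq> set (cols A) \<and> lin_indpt T) \<and> {} \<subseteq> S"
    by (rule maximal_exists_superset[of "set (cols A)"]) (auto simp: \<open>lin_indpt {}\<close>)
  then obtain S where S_fin: "finite S" and S: "maximal S (\<lambda>T. T \<subseteq> set (cols A) \<and> lin_indpt T)"
    by (elim exE conjE)
  have "S \<subseteq> set (cols A)"
    using S unfolding maximal_def by simp
  then have S_carrier: "S \<subseteq> carrier_vec n"
    using A cols_dim by blast
  obtain h where h: "bij_betw h {..<card S} S"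
    using ex_bij_betw_nat_finite[OF S_fin] atLeast0LessThan by metis
  have "\<exists>a. col A j = lincomb a S" if "j < nc" for j
  proof -
    have "col A j \<in> set (cols A)"
      using A that by (simp add: cols_def)
    then have "col A j \<in> span S"
      using cols_subset_span_of_maximal_lin_indpt[OF A S] by blast
    then show ?thesis using finite_span[OF S_fin S_carrier] by blast
  qed
  then obtain a where a: "\<And>j. j < nc \<Longrightarrow> col A j = lincomb (a j) S" by metis
  have "A $$ (i, j) = (\<Sum>t<rank A. h t $ i * a j (h t))" if i: "i < n" and j: "j < nc" for i j
  proof -
    have "A $$ (i, j) = col A j $ i" using A i j by simp
    also have "\<dots> = (\<Sum>x\<in>S. a j x * x $ i)" using a[OF j] lincomb_index[OF i S_carrier] by simp
    also have "\<dots> = (\<Sum>t<card S. a j (h t) * h t $ i)"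
      using sum.reindex_bij_betw[OF h, of "\<lambda>x. a j x * x $ i"] by simp
    finally show ?thesis by (simp add: rank_card_indpt[OF A S] mult.commute)
  qed
  then show ?thesis
    by (rule that[of "\<lambda>t i. h t $ i" "\<lambda>t j. a j (h t)"])
qed

lemma rk_poly2_qform_poly_le:
  fixes M :: "nat \<Rightarrow> nat \<Rightarrow> 'a::comm_ring_1"
  assumes "\<And>i j. i < n \<Longrightarrow> j < n \<Longrightarrow>
      mono_coeff M i j = mono_coeff (\<lambda>i j. \<Sum>t<r. u t i * v t j) i j"
  shows "rk_poly2 n (qform_poly n M) \<le> r"
proof -
  have "mono_coeff (\<lambda>i j. if i < n \<and> j < n then M i j else 0) i j = mono_coeff M i j"
    if "i < n" "j < n" for i j
    using that by (simp add: mono_coeff_def)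
  then have "poly2_eq n (qform_poly n M) (poly2_sum (\<lambda>t. poly1_mult (0, u t) (0, v t)) r)"
    using assms by (simp add: poly2_eq_def qform_poly_def poly2_sum_def poly1_mult_def)
  then show ?thesis
    unfolding rk_poly2_def by (intro Least_le exI)
qed

lemma erk_qform_le_rk_poly2:
  "erk_qform n Q \<le> rk_poly2 n (qform_poly n (\<lambda>i j. Q i j + (if i = j then a i else 0)))"
  unfolding erk_qform_def by (rule Least_le) blast

lemma erk_bform_attained:
  obtains c where
    "erk_bform n B = vec_space.rank n (mat n n (\<lambda>(i, j). B i j + (if i = j then c i else 0)))"
proof -
  let ?rank = "\<lambda>c. vec_space.rank n (mat n n (\<lambda>(i, j). B i j + (if i = j then c i else 0)))"
  have "\<exists>c. (LEAST r. \<exists>c. r = ?rank c) = ?rank c"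
    by (rule LeastI_ex) blast
  then obtain c where "(LEAST r. \<exists>c. r = ?rank c) = ?rank c" ..
  then show ?thesis
    by (intro that) (simp add: erk_bform_def)
qed

theorem lemma2p9:
  fixes p n :: nat
    and Q B :: "nat \<Rightarrow> nat \<Rightarrow> 'a::{field, finite}"
  assumes "prime p"
    and "card (UNIV :: 'a set) = p"
    and "\<forall>x :: nat \<Rightarrow> 'a. qform_eval n Q x = bform_eval n B x x"
  shows "erk_qform n Q \<le> erk_bform n B"
proof -
  have "qform_eval n Q x = qform_eval n B x" for x
    using assms(3) by (simp add: qform_eval_def bform_eval_def)
  then have coeff_eq: "mono_coeff Q i j = mono_coeff B i j" if "i < n" "j < n" for i j
    using mono_coeff_eq_if_qform_eval_eq that by blast
  interpret vec_space "TYPE('a)" n .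
  obtain c where c:
    "erk_bform n B = rank (mat n n (\<lambda>(i, j). B i j + (if i = j then c i else 0)))"
    by (rule erk_bform_attained)
  define Bc where "Bc = mat n n (\<lambda>(i, j). B i j + (if i = j then c i else 0))"
  have "Bc \<in> carrier_mat n n"
    unfolding Bc_def by simp
  then obtain u v where factor:
    "\<And>i j. i < n \<Longrightarrow> j < n \<Longrightarrow> Bc $$ (i, j) = (\<Sum>t<rank Bc. u t i * v t j)"
    by (rule rank_factorization) fast
  have uv: "B i j + (if i = j then c i else 0) = (\<Sum>t<erk_bform n B. u t i * v t j)"
    if "i < n" "j < n" for i j
    using factor[OF that] that c by (simp add: Bc_def)
  have "rk_poly2 n (qform_poly n (\<lambda>i j. Q i j + (if i = j then c i else 0))) \<le> erk_bform n B"
  proof (rule rk_poly2_qform_poly_le)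
    fix i j assume "i < n" "j < n"
    then show "mono_coeff (\<lambda>i j. Q i j + (if i = j then c i else 0)) i j =
        mono_coeff (\<lambda>i j. \<Sum>t<erk_bform n B. u t i * v t j) i j"
      using coeff_eq[of i j] uv[of i j, symmetric] uv[of j i, symmetric]
      by (auto simp: mono_coeff_def)
  qed
  then show ?thesis
    using erk_qform_le_rk_poly2 order_trans by blast
qed

end
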